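(* Let $l\ge 2$ and let $\Gamma$ be the $l$-lattice. Then the spectrum of its (signless) normalized Laplacian is given by: $0$, with multiplicity $l^2-2l+1$; $\frac{l}{2}$, with multiplicity $2(l-1)$; and $l$, with multiplicity $1$.
   Context: A hypergraph $\Gamma=(\mathcal{V},\mathcal{H})$ has a finite vertex set $\mathcal{V}$ and a set $\mathcal{H}$ of nonempty subsets of $\mathcal{V}$ (hyperedges). $\deg(v)$ is the number of hyperedges containing $v$, $D$ the diagonal degree matrix, $A$ the matrix with $A_{ii}=0$ and $A_{ij}=-\#\{h\in\mathcal{H}: v_i,v_j\in h\}$ for $i\ne j$, and the (signless) normalized Laplacian is $L=\mathrm{Id}-D^{-1}A$. For $l\in\mathbb{N}_{\ge 2}$, the $l$-lattice is the hypergraph with vertex set $\{v_{ab}: a,b\in\{1,\ldots,l\}\}$ ($l^2$ vertices arranged in an $l\times l$ grid) and $2l$ hyperedges, namely the rows $\{v_{a1},\ldots,v_{al}\}$ for $a=1,\ldots,l$ and the columns $\{v_{1b},\ldots,v_{lb}\}$ for $b=1,\ldots,l$. *)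

theory Defs
  imports "Jordan_Normal_Form.Char_Poly"
begin

text \<open>A hypergraph on the vertex set {0..<n} (vertex v_i is the index i) with a
  set H of nonempty hyperedges.\<close>

definition hdeg :: "nat set set \<Rightarrow> nat \<Rightarrow> nat" where
  "hdeg H i = card {h \<in> H. i \<in> h}"

definition hadj :: "nat set set \<Rightarrow> nat \<Rightarrow> nat \<Rightarrow> real" where
  "hadj H i j = (if i = j then 0 else - real (card {h \<in> H. i \<in> h \<and> j \<in> h}))"

definition norm_laplacian :: "nat \<Rightarrow> nat set set \<Rightarrow> real mat" where
  "norm_laplacian n H =
     one_mat n - (mat n n (\<lambda>(i,j). if i = j then 1 / real (hdeg H i) else 0)
                  * mat n n (\<lambda>(i,j). hadj H i j))"

text \<open>The l-lattice: vertex v_ab (a,b in 1..l) is encoded as index (a-1)*l+(b-1).\<close>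
definition lattice_edges :: "nat \<Rightarrow> nat set set" where
  "lattice_edges l =
     (\<lambda>a. {a * l + b | b. b < l}) ` {..<l} \<union> (\<lambda>b. {a * l + b | a. a < l}) ` {..<l}"

end

(*
  Every vertex of the l-lattice lies in exactly one row and one column, so D = 2 Id and
  L_ij = ([i, j in the same row] + [i, j in the same column]) / 2.  With the row-major indexing
  of the vertices this is the Kronecker sum J/2 \<oplus> J/2 = J/2 \<otimes> Id + Id \<otimes> J/2, where J is the
  l \<times> l all-ones matrix.  Triangularizing both summands (Schur decomposition) triangularizes the
  Kronecker sum, so its eigenvalues are the pairwise sums of those of the summands.  J/2 has the
  eigenvalue l/2 once and 0 with multiplicity l - 1, and the pairwise sums are l once, l/2 with
  multiplicity 2(l - 1) and 0 with multiplicity (l - 1)^2.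
*)
theory Submission
  imports Defs "Jordan_Normal_Form.Schur_Decomposition"
begin

section \<open>Kronecker products and Kronecker sums\<close>

lemma mult_add_less_mult:
  fixes a b m n :: nat
  assumes "a < m" "b < n"
  shows "a * n + b < m * n"
proof -
  have "a * n + b < (a + 1) * n" using assms(2) by simp
  also have "\<dots> \<le> m * n" using assms(1) by (intro mult_right_mono) auto
  finally show ?thesis .
qed

lemma div_mod_less_mult:
  fixes i :: nat
  assumes "i < m * n"
  shows "i div n < m" "i mod n < n"
  using assms by (cases n; simp add: less_mult_imp_div_less)+

lemma bij_betw_div_mod:
  "bij_betw (\<lambda>i. (i div n, i mod n)) {..<m * n} ({..<m} \<times> {..<(n::nat)})"
proof (rule bij_betw_byWitness[where f' = "\<lambda>(a, b). a * n + b"])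
  show "\<forall>i\<in>{..<m * n}. (\<lambda>(a, b). a * n + b) (i div n, i mod n) = i"
    by simp
  show "\<forall>p\<in>{..<m} \<times> {..<n}. (\<lambda>i. (i div n, i mod n)) ((\<lambda>(a, b). a * n + b) p) = p"
    by auto
  show "(\<lambda>i. (i div n, i mod n)) ` {..<m * n} \<subseteq> {..<m} \<times> {..<n}"
    using div_mod_less_mult by blast
  show "(\<lambda>(a, b). a * n + b) ` ({..<m} \<times> {..<n}) \<subseteq> {..<m * n}"
    using mult_add_less_mult by fastforce
qed

lemma sum_lessThan_mult_div_mod:
  "(\<Sum>i<m * n. f (i div n) (i mod n)) = (\<Sum>a<m. \<Sum>b<(n::nat). f a b)"
  by (simp add: sum.reindex_bij_betw[OF bij_betw_div_mod, of "\<lambda>(a, b). f a b", symmetric]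
      sum.cartesian_product)

lemma prod_lessThan_mult_div_mod:
  "(\<Prod>i<m * n. f (i div n) (i mod n)) = (\<Prod>a<m. \<Prod>b<(n::nat). f a b)"
  by (simp add: prod.reindex_bij_betw[OF bij_betw_div_mod, of "\<lambda>(a, b). f a b", symmetric]
      prod.cartesian_product)

lemma index_mult_mat_sum:
  assumes "A \<in> carrier_mat n k" "B \<in> carrier_mat k m" "i < n" "j < m"
  shows "(A * B) $$ (i, j) = (\<Sum>y<k. A $$ (i, y) * B $$ (y, j))"
proof -
  have "(A * B) $$ (i, j) = (\<Sum>y\<in>{0..<k}. row A i $ y * col B j $ y)"
    using assms by (simp add: scalar_prod_def)
  also have "\<dots> = (\<Sum>y<k. A $$ (i, y) * B $$ (y, j))"
    unfolding lessThan_atLeast0 using assms by (intro sum.cong) simp_all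
  finally show ?thesis .
qed

lemma prod_list_map_diag_mat:
  "A \<in> carrier_mat n n \<Longrightarrow> (\<Prod>a\<leftarrow>diag_mat A. f a) = (\<Prod>i<n. f (A $$ (i, i)))"
  by (simp add: diag_mat_def prod.distinct_set_conv_list[symmetric] lessThan_atLeast0)

definition kronecker_product :: "'a :: times mat \<Rightarrow> 'a mat \<Rightarrow> 'a mat" where
  "kronecker_product A B = mat (dim_row A * dim_row B) (dim_col A * dim_col B)
     (\<lambda>(i, j). A $$ (i div dim_row B, j div dim_col B) * B $$ (i mod dim_row B, j mod dim_col B))"

lemma index_kronecker_product [simp]:
  "i < dim_row A * dim_row B \<Longrightarrow> j < dim_col A * dim_col B \<Longrightarrow>
     kronecker_product A B $$ (i, j) =
       A $$ (i div dim_row B, j div dim_col B) * B $$ (i mod dim_row B, j mod dim_col B)"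
  "dim_row (kronecker_product A B) = dim_row A * dim_row B"
  "dim_col (kronecker_product A B) = dim_col A * dim_col B"
  by (simp_all add: kronecker_product_def)

lemma kronecker_product_carrier_mat [simp]:
  "A \<in> carrier_mat n\<^sub>1 m\<^sub>1 \<Longrightarrow> B \<in> carrier_mat n\<^sub>2 m\<^sub>2 \<Longrightarrow>
     kronecker_product A B \<in> carrier_mat (n\<^sub>1 * n\<^sub>2) (m\<^sub>1 * m\<^sub>2)"
  by (intro carrier_matI) simp_all

lemma kronecker_product_mult:
  fixes A :: "'a :: comm_semiring_1 mat"
  assumes A: "A \<in> carrier_mat n\<^sub>1 k\<^sub>1" and B: "B \<in> carrier_mat n\<^sub>2 k\<^sub>2"
    and C: "C \<in> carrier_mat k\<^sub>1 m\<^sub>1" and D: "D \<in> carrier_mat k\<^sub>2 m\<^sub>2"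
  shows "kronecker_product A B * kronecker_product C D = kronecker_product (A * C) (B * D)"
proof (rule eq_matI)
  fix i j
  assume "i < dim_row (kronecker_product (A * C) (B * D))"
    and "j < dim_col (kronecker_product (A * C) (B * D))"
  then have i: "i < n\<^sub>1 * n\<^sub>2" and j: "j < m\<^sub>1 * m\<^sub>2" using A B C D by simp_all
  let ?f = "\<lambda>a b. A $$ (i div n\<^sub>2, a) * C $$ (a, j div m\<^sub>2) * (B $$ (i mod n\<^sub>2, b) * D $$ (b, j mod m\<^sub>2))"
  have "(kronecker_product A B * kronecker_product C D) $$ (i, j)
      = (\<Sum>k<k\<^sub>1 * k\<^sub>2. kronecker_product A B $$ (i, k) * kronecker_product C D $$ (k, j))"
    by (rule index_mult_mat_sum[OF kronecker_product_carrier_mat[OF A B]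
          kronecker_product_carrier_mat[OF C D] i j])
  also have "\<dots> = (\<Sum>k<k\<^sub>1 * k\<^sub>2. ?f (k div k\<^sub>2) (k mod k\<^sub>2))"
    using A B C D i j by (intro sum.cong refl) (simp add: mult_ac)
  also have "\<dots> = (\<Sum>a<k\<^sub>1. A $$ (i div n\<^sub>2, a) * C $$ (a, j div m\<^sub>2))
                  * (\<Sum>b<k\<^sub>2. B $$ (i mod n\<^sub>2, b) * D $$ (b, j mod m\<^sub>2))"
    by (simp only: sum_lessThan_mult_div_mod[of ?f] sum_product)
  also have "\<dots> = (A * C) $$ (i div n\<^sub>2, j div m\<^sub>2) * (B * D) $$ (i mod n\<^sub>2, j mod m\<^sub>2)"
    unfolding index_mult_mat_sum[OF A C div_mod_less_mult(1)[OF i] div_mod_less_mult(1)[OF j]]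
      index_mult_mat_sum[OF B D div_mod_less_mult(2)[OF i] div_mod_less_mult(2)[OF j]] ..
  also have "\<dots> = kronecker_product (A * C) (B * D) $$ (i, j)"
    using A B C D i j by simp
  finally show "(kronecker_product A B * kronecker_product C D) $$ (i, j)
      = kronecker_product (A * C) (B * D) $$ (i, j)" .
qed (use A B C D in simp_all)

lemma kronecker_product_one_mat:
  "kronecker_product (1\<^sub>m n) (1\<^sub>m m) = (1\<^sub>m (n * m) :: 'a :: semiring_1 mat)"
proof (rule eq_matI)
  fix i j assume "i < dim_row (1\<^sub>m (n * m) :: 'a mat)" "j < dim_col (1\<^sub>m (n * m) :: 'a mat)"
  then have i: "i < n * m" and j: "j < n * m" by simp_all
  have "i div m = j div m \<and> i mod m = j mod m \<longleftrightarrow> i = j"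
    by (metis div_mult_mod_eq)
  then show "kronecker_product (1\<^sub>m n) (1\<^sub>m m) $$ (i, j) = (1\<^sub>m (n * m) :: 'a mat) $$ (i, j)"
    using i j div_mod_less_mult[OF i] div_mod_less_mult[OF j] by (cases "i = j") auto
qed simp_all

lemma upper_triangular_kronecker_product:
  fixes A :: "'a :: mult_zero mat"
  assumes A: "A \<in> carrier_mat n n" and B: "B \<in> carrier_mat m m"
    and "upper_triangular A" "upper_triangular B"
  shows "upper_triangular (kronecker_product A B)"
proof
  fix i j assume ji: "j < i" and "i < dim_row (kronecker_product A B)"
  then have i: "i < n * m" and j: "j < n * m" using A B by simp_all
  have "A $$ (i div m, j div m) = 0 \<or> B $$ (i mod m, j mod m) = 0"
  proof (cases "j div m < i div m")
    case True
    then show ?thesis using upper_triangularD[OF assms(3) True] A div_mod_less_mult[OF i] by simp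
  next
    case False
    then have "i div m * m = j div m * m" using ji div_le_mono[of j i m] by simp
    then have "j mod m < i mod m" using ji div_mult_mod_eq[of i m] div_mult_mod_eq[of j m] by linarith
    then show ?thesis using upper_triangularD[OF assms(4)] B div_mod_less_mult[OF i] by simp
  qed
  moreover have "kronecker_product A B $$ (i, j) = A $$ (i div m, j div m) * B $$ (i mod m, j mod m)"
    using A B i j by simp
  ultimately show "kronecker_product A B $$ (i, j) = 0" by auto
qed

lemma similar_mat_wit_kronecker_product:
  fixes A :: "'a :: comm_semiring_1 mat"
  assumes AA': "similar_mat_wit A A' P Q" and BB': "similar_mat_wit B B' P' Q'"
  shows "similar_mat_wit (kronecker_product A B) (kronecker_product A' B')
           (kronecker_product P P') (kronecker_product Q Q')"
proof -
  obtain n m where n: "n = dim_row A" and m: "m = dim_row B" by blast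
  note A = similar_mat_witD[OF n AA'] and B = similar_mat_witD[OF m BB']
  show ?thesis
  proof (rule similar_mat_witI[of _ _ "n * m"])
    show "kronecker_product P P' * kronecker_product Q Q' = 1\<^sub>m (n * m)"
      unfolding kronecker_product_mult[OF A(6) B(6) A(7) B(7)] A(1) B(1)
      by (rule kronecker_product_one_mat)
    show "kronecker_product Q Q' * kronecker_product P P' = 1\<^sub>m (n * m)"
      unfolding kronecker_product_mult[OF A(7) B(7) A(6) B(6)] A(2) B(2)
      by (rule kronecker_product_one_mat)
    show "kronecker_product A B = kronecker_product P P' * kronecker_product A' B' * kronecker_product Q Q'"
      unfolding kronecker_product_mult[OF A(6) B(6) A(5) B(5)]
        kronecker_product_mult[OF mult_carrier_mat[OF A(6) A(5)] mult_carrier_mat[OF B(6) B(5)] A(7) B(7)]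
      by (simp only: A(3)[symmetric] B(3)[symmetric])
  qed (use A B in simp_all)
qed

definition kronecker_sum :: "'a :: semiring_1 mat \<Rightarrow> 'a mat \<Rightarrow> 'a mat" where
  "kronecker_sum A B = kronecker_product A (1\<^sub>m (dim_row B)) + kronecker_product (1\<^sub>m (dim_row A)) B"

lemma kronecker_sum_carrier_mat [simp]:
  assumes "A \<in> carrier_mat n n" "B \<in> carrier_mat m m"
  shows "kronecker_sum A B \<in> carrier_mat (n * m) (n * m)"
  unfolding kronecker_sum_def carrier_matD(1)[OF assms(1)] carrier_matD(1)[OF assms(2)]
  by (rule add_carrier_mat[OF kronecker_product_carrier_mat[OF one_carrier_mat assms(2)]])

lemma index_kronecker_sum:
  assumes A: "A \<in> carrier_mat n n" and B: "B \<in> carrier_mat m m" and i: "i < n * m" and j: "j < n * m"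
  shows "kronecker_sum A B $$ (i, j) =
    A $$ (i div m, j div m) * of_bool (i mod m = j mod m) + of_bool (i div m = j div m) * B $$ (i mod m, j mod m)"
proof -
  have "kronecker_sum A B $$ (i, j)
      = kronecker_product A (1\<^sub>m m) $$ (i, j) + kronecker_product (1\<^sub>m n) B $$ (i, j)"
    unfolding kronecker_sum_def carrier_matD(1)[OF A] carrier_matD(1)[OF B]
    by (rule index_add_mat(1)) (use i j B in simp_all)
  also have "\<dots> = A $$ (i div m, j div m) * of_bool (i mod m = j mod m)
      + of_bool (i div m = j div m) * B $$ (i mod m, j mod m)"
    using A B i j div_mod_less_mult[OF i] div_mod_less_mult[OF j] by simp
  finally show ?thesis .
qed

lemma similar_mat_wit_add:
  assumes AA': "similar_mat_wit A A' P Q" and BB': "similar_mat_wit B B' P Q"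
  shows "similar_mat_wit (A + B) (A' + B') P Q"
proof -
  obtain n where n: "n = dim_row A" by blast
  note A = similar_mat_witD[OF n AA']
  have "dim_row P = n" using A(6) by simp
  moreover have "dim_row P = dim_row B" using similar_mat_witD(6)[OF refl BB'] by simp
  ultimately have "n = dim_row B" by simp
  note B = similar_mat_witD[OF this BB']
  show ?thesis
  proof (rule similar_mat_witI[OF A(1,2) _ add_carrier_mat[OF B(4)] add_carrier_mat[OF B(5)] A(6,7)])
    have "P * (A' + B') * Q = P * A' * Q + P * B' * Q"
      unfolding mult_add_distrib_mat[OF A(6) A(5) B(5)]
      by (rule add_mult_distrib_mat[OF mult_carrier_mat[OF A(6) A(5)] mult_carrier_mat[OF A(6) B(5)] A(7)])
    then show "A + B = P * (A' + B') * Q" by (simp only: A(3)[symmetric] B(3)[symmetric])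
  qed
qed

lemma similar_mat_wit_one_mat:
  assumes "P * Q = 1\<^sub>m n" "Q * P = 1\<^sub>m n" "P \<in> carrier_mat n n" "Q \<in> carrier_mat n n"
  shows "similar_mat_wit (1\<^sub>m n) (1\<^sub>m n) P Q"
proof (rule similar_mat_witI[OF assms(1,2) _ one_carrier_mat one_carrier_mat assms(3,4)])
  show "1\<^sub>m n = P * 1\<^sub>m n * Q"
    unfolding right_mult_one_mat[OF assms(3)] assms(1) ..
qed

lemma similar_mat_wit_kronecker_sum:
  fixes A :: "'a :: comm_semiring_1 mat"
  assumes AA': "similar_mat_wit A A' P Q" and BB': "similar_mat_wit B B' P' Q'"
  shows "similar_mat_wit (kronecker_sum A B) (kronecker_sum A' B')
           (kronecker_product P P') (kronecker_product Q Q')"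
proof -
  obtain n m where n: "n = dim_row A" and m: "m = dim_row B" by blast
  note A = similar_mat_witD[OF n AA'] and B = similar_mat_witD[OF m BB']
  have "similar_mat_wit (kronecker_product A (1\<^sub>m m)) (kronecker_product A' (1\<^sub>m m))
      (kronecker_product P P') (kronecker_product Q Q')"
    by (rule similar_mat_wit_kronecker_product[OF AA' similar_mat_wit_one_mat[OF B(1,2,6,7)]])
  moreover have "similar_mat_wit (kronecker_product (1\<^sub>m n) B) (kronecker_product (1\<^sub>m n) B')
      (kronecker_product P P') (kronecker_product Q Q')"
    by (rule similar_mat_wit_kronecker_product[OF similar_mat_wit_one_mat[OF A(1,2,6,7)] BB'])
  moreover have "dim_row A' = n" "dim_row B' = m" using A(5) B(5) by simp_all
  ultimately show ?thesis
    unfolding kronecker_sum_def n[symmetric] m[symmetric] by (simp add: similar_mat_wit_add)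
qed

lemma upper_triangular_kronecker_sum:
  fixes A :: "'a :: semiring_1 mat"
  assumes A: "A \<in> carrier_mat n n" and B: "B \<in> carrier_mat m m"
    and "upper_triangular A" "upper_triangular B"
  shows "upper_triangular (kronecker_sum A B)"
proof
  fix i j assume ji: "j < i" and "i < dim_row (kronecker_sum A B)"
  then have i: "i < n * m" using kronecker_sum_carrier_mat[OF A B] by simp
  have "kronecker_product A (1\<^sub>m m) $$ (i, j) = 0"
    using upper_triangular_kronecker_product[OF A one_carrier_mat assms(3) upper_triangular_one] ji i A
    by (intro upper_triangularD) simp_all
  moreover have "kronecker_product (1\<^sub>m n) B $$ (i, j) = 0"
    using upper_triangular_kronecker_product[OF one_carrier_mat B upper_triangular_one assms(4)] ji i B
    by (intro upper_triangularD) simp_all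
  ultimately show "kronecker_sum A B $$ (i, j) = 0"
    using A B i ji unfolding kronecker_sum_def by (subst index_add_mat) simp_all
qed

theorem char_poly_kronecker_sum:
  fixes A :: "'a :: conjugatable_ordered_field mat"
  assumes A: "A \<in> carrier_mat n n" and B: "B \<in> carrier_mat m m"
    and char_A: "char_poly A = (\<Prod>a\<leftarrow>as. [:- a, 1:])"
    and char_B: "char_poly B = (\<Prod>b\<leftarrow>bs. [:- b, 1:])"
  shows "char_poly (kronecker_sum A B) = (\<Prod>a\<leftarrow>as. \<Prod>b\<leftarrow>bs. [:- (a + b), 1:])"
proof -
  obtain S P Q where "schur_decomposition A as = (S, P, Q)" by (cases "schur_decomposition A as")
  with schur_decomposition[OF A char_A]
  have AS: "similar_mat_wit A S P Q" and S: "upper_triangular S" "diag_mat S = as" by auto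
  obtain T P' Q' where "schur_decomposition B bs = (T, P', Q')" by (cases "schur_decomposition B bs")
  with schur_decomposition[OF B char_B]
  have BT: "similar_mat_wit B T P' Q'" and T: "upper_triangular T" "diag_mat T = bs" by auto
  have S_carrier: "S \<in> carrier_mat n n" and T_carrier: "T \<in> carrier_mat m m"
    using similar_mat_witD2(5)[OF A AS] similar_mat_witD2(5)[OF B BT] .
  note ST_carrier = kronecker_sum_carrier_mat[OF S_carrier T_carrier]
  have "similar_mat (kronecker_sum A B) (kronecker_sum S T)"
    using similar_mat_wit_kronecker_sum[OF AS BT] unfolding similar_mat_def by blast
  then have "char_poly (kronecker_sum A B) = char_poly (kronecker_sum S T)"
    by (rule char_poly_similar)
  also have "\<dots> = (\<Prod>c\<leftarrow>diag_mat (kronecker_sum S T). [:- c, 1:])"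
    by (rule char_poly_upper_triangular[OF ST_carrier
          upper_triangular_kronecker_sum[OF S_carrier T_carrier S(1) T(1)]])
  also have "\<dots> = (\<Prod>i<n * m. [:- (S $$ (i div m, i div m) + T $$ (i mod m, i mod m)), 1:])"
    unfolding prod_list_map_diag_mat[OF ST_carrier]
    by (intro prod.cong refl) (simp add: index_kronecker_sum[OF S_carrier T_carrier])
  also have "\<dots> = (\<Prod>a<n. \<Prod>b<m. [:- (S $$ (a, a) + T $$ (b, b)), 1:])"
    by (rule prod_lessThan_mult_div_mod)
  also have "\<dots> = (\<Prod>a\<leftarrow>as. \<Prod>b\<leftarrow>bs. [:- (a + b), 1:])"
    unfolding S(2)[symmetric] T(2)[symmetric]
    by (simp add: prod_list_map_diag_mat[OF S_carrier] prod_list_map_diag_mat[OF T_carrier])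
  finally show ?thesis .
qed

section \<open>The all-ones matrix\<close>

definition ones_mat :: "nat \<Rightarrow> 'a :: one mat" where
  "ones_mat n = mat n n (\<lambda>_. 1)"

lemma char_poly_smult_ones_mat:
  fixes c :: "'a :: field"
  assumes "0 < n"
  shows "char_poly (c \<cdot>\<^sub>m ones_mat n) = (\<Prod>a\<leftarrow>c * of_nat n # replicate (n - 1) 0. [:- a, 1:])"
proof -
  \<comment> \<open>The first column of P is the all-ones vector and the others are unit vectors; conjugating
    by P leaves a single nonzero row, namely the column sums (n, 1, ..., 1) of P.\<close>
  define P :: "'a mat" where "P = mat n n (\<lambda>(x, z). if z = 0 \<or> x = z then 1 else 0)"
  define Q :: "'a mat" where "Q = mat n n (\<lambda>(x, z). if x = z then 1 else if z = 0 then -1 else 0)"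
  define T :: "'a mat" where "T = mat n n (\<lambda>(x, z). if x = 0 then if z = 0 then of_nat n else 1 else 0)"
  have carrier: "P \<in> carrier_mat n n" "Q \<in> carrier_mat n n" "T \<in> carrier_mat n n"
    "ones_mat n \<in> carrier_mat n n"
    by (simp_all add: P_def Q_def T_def ones_mat_def)
  have Q_mult: "(Q * M) $$ (x, z) = M $$ (x, z) - (if x = 0 then 0 else M $$ (0, z))"
    if M: "M \<in> carrier_mat n n" and "x < n" "z < n" for x z M
  proof -
    have "(Q * M) $$ (x, z) = (\<Sum>y<n. (if y = x then M $$ (y, z) else 0) - (if y = 0 \<and> x \<noteq> 0 then M $$ (y, z) else 0))"
      unfolding index_mult_mat_sum[OF carrier(2) M that(2,3)]
      using that by (intro sum.cong) (auto simp: Q_def)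
    also have "\<dots> = M $$ (x, z) - (if x = 0 then 0 else M $$ (0, z))"
      using that assms by (simp add: sum_subtractf sum.delta)
    finally show ?thesis .
  qed
  have QP: "Q * P = 1\<^sub>m n"
  proof (rule eq_matI)
    fix x z assume "x < dim_row (1\<^sub>m n :: 'a mat)" "z < dim_col (1\<^sub>m n :: 'a mat)"
    then show "(Q * P) $$ (x, z) = 1\<^sub>m n $$ (x, z)"
      using assms by (simp add: Q_mult[OF carrier(1)]) (simp add: P_def)
  qed (simp_all add: P_def Q_def)
  have PQ: "P * Q = 1\<^sub>m n"
    using mat_mult_left_right_inverse[OF carrier(2,1) QP] .
  have QJ: "(Q * ones_mat n) $$ (x, y) = (if x = 0 then 1 else 0)" if "x < n" "y < n" for x y
    using that assms by (simp add: Q_mult[OF carrier(4)]) (simp add: ones_mat_def)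
  have column_sum_P: "(\<Sum>y<n. P $$ (y, z)) = (if z = 0 then of_nat n else 1)" if "z < n" for z
  proof -
    have "(\<Sum>y<n. P $$ (y, z)) = (\<Sum>y<n. if z = 0 \<or> y = z then 1 else 0)"
      by (intro sum.cong) (simp_all add: P_def that)
    then show ?thesis using that by (simp add: sum.delta)
  qed
  have QJP: "Q * ones_mat n * P = T"
  proof (rule eq_matI)
    fix x z assume "x < dim_row T" "z < dim_col T"
    then have x: "x < n" and z: "z < n" by (simp_all add: T_def)
    have "(Q * ones_mat n * P) $$ (x, z) = (\<Sum>y<n. (if x = 0 then 1 else 0) * P $$ (y, z))"
      unfolding index_mult_mat_sum[OF mult_carrier_mat[OF carrier(2,4)] carrier(1) x z]
      using x by (intro sum.cong) (simp_all add: QJ)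
    also have "\<dots> = T $$ (x, z)"
      using x z by (simp add: sum_distrib_left[symmetric] column_sum_P T_def)
    finally show "(Q * ones_mat n * P) $$ (x, z) = T $$ (x, z)" .
  qed (simp_all add: T_def Q_def P_def)
  have "similar_mat_wit T (ones_mat n) Q P"
    by (rule similar_mat_witI[OF QP PQ QJP[symmetric] carrier(3,4,2,1)])
  then have "similar_mat (c \<cdot>\<^sub>m ones_mat n) (c \<cdot>\<^sub>m T)"
    unfolding similar_mat_def using similar_mat_wit_smult[OF similar_mat_wit_sym] by blast
  then have "char_poly (c \<cdot>\<^sub>m ones_mat n) = char_poly (c \<cdot>\<^sub>m T)"
    by (rule char_poly_similar)
  also have "\<dots> = (\<Prod>a\<leftarrow>diag_mat (c \<cdot>\<^sub>m T). [:- a, 1:])"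
    by (rule char_poly_upper_triangular[of _ n]) (auto simp: T_def)
  also have "diag_mat (c \<cdot>\<^sub>m T) = c * of_nat n # replicate (n - 1) 0"
    using assms by (intro nth_equalityI) (auto simp: diag_mat_def T_def nth_Cons')
  finally show ?thesis .
qed

section \<open>The lattice hypergraph\<close>

definition lattice_row :: "nat \<Rightarrow> nat \<Rightarrow> nat set" where
  "lattice_row l a = {a * l + b | b. b < l}"

definition lattice_col :: "nat \<Rightarrow> nat \<Rightarrow> nat set" where
  "lattice_col l b = {a * l + b | a. a < l}"

lemma lattice_edges_eq: "lattice_edges l = lattice_row l ` {..<l} \<union> lattice_col l ` {..<l}"
  by (simp add: lattice_edges_def lattice_row_def[abs_def] lattice_col_def[abs_def])

lemma mem_lattice_rowI: "b < l \<Longrightarrow> a * l + b \<in> lattice_row l a"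
  unfolding lattice_row_def by blast

lemma mem_lattice_colI: "a < l \<Longrightarrow> a * l + b \<in> lattice_col l b"
  unfolding lattice_col_def by blast

lemma mem_lattice_row:
  assumes "0 < l"
  shows "i \<in> lattice_row l a \<longleftrightarrow> i div l = a"
proof
  assume "i \<in> lattice_row l a"
  then obtain b where "b < l" "i = a * l + b" unfolding lattice_row_def by blast
  then show "i div l = a" by simp
next
  assume "i div l = a"
  then have "i = a * l + i mod l" by (metis div_mult_mod_eq)
  then show "i \<in> lattice_row l a"
    using mem_lattice_rowI[of "i mod l" l a] assms by simp
qed

lemma mem_lattice_col:
  assumes "b < l"
  shows "i \<in> lattice_col l b \<longleftrightarrow> i < l * l \<and> i mod l = b"
proof
  assume "i \<in> lattice_col l b"
  then obtain a where "a < l" "i = a * l + b" unfolding lattice_col_def by blast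
  then show "i < l * l \<and> i mod l = b" using assms mult_add_less_mult by simp
next
  assume "i < l * l \<and> i mod l = b"
  then have "i div l < l" "i = (i div l) * l + b"
    using div_mod_less_mult[of i l l] by (metis div_mult_mod_eq)+
  then show "i \<in> lattice_col l b"
    using mem_lattice_colI[of "i div l" l b] by simp
qed

lemma lattice_row_neq_col:
  assumes "2 \<le> l" "b < l"
  shows "lattice_row l a \<noteq> lattice_col l b"
proof
  assume row_eq_col: "lattice_row l a = lattice_col l b"
  have "a * l + 0 \<in> lattice_col l b" "a * l + (l - 1) \<in> lattice_col l b"
    unfolding row_eq_col[symmetric] using assms by (intro mem_lattice_rowI; simp)+
  then have "(a * l + 0) mod l = b" "(a * l + (l - 1)) mod l = b"
    unfolding mem_lattice_col[OF assms(2)] by simp_all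
  then have "0 mod l = b" "(l - 1) mod l = b"
    unfolding mod_mult_self3 .
  then show False using assms(1) by simp
qed

lemma lattice_edges_containing:
  assumes "2 \<le> l" "i < l * l"
  shows "{h \<in> lattice_edges l. i \<in> h} = {lattice_row l (i div l), lattice_col l (i mod l)}"
proof -
  have l: "0 < l" using assms(1) by simp
  note i = div_mod_less_mult[OF assms(2)]
  have row: "i \<in> lattice_row l a \<longleftrightarrow> a = i div l" for a
    unfolding mem_lattice_row[OF l] by (rule eq_commute)
  have col: "i \<in> lattice_col l b \<longleftrightarrow> b = i mod l" if "b < l" for b
    using mem_lattice_col[OF that] assms(2) by auto
  show ?thesis
  proof (intro Set.set_eqI iffI)
    fix h assume "h \<in> {h \<in> lattice_edges l. i \<in> h}"
    then consider a where "a < l" "h = lattice_row l a" "i \<in> h"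
      | b where "b < l" "h = lattice_col l b" "i \<in> h"
      unfolding lattice_edges_eq by blast
    then show "h \<in> {lattice_row l (i div l), lattice_col l (i mod l)}"
      by cases (simp_all add: row col)
  next
    fix h assume "h \<in> {lattice_row l (i div l), lattice_col l (i mod l)}"
    then have "h = lattice_row l (i div l) \<or> h = lattice_col l (i mod l)" by simp
    moreover have "lattice_row l (i div l) \<in> lattice_edges l" "lattice_col l (i mod l) \<in> lattice_edges l"
      unfolding lattice_edges_eq using i by simp_all
    ultimately show "h \<in> {h \<in> lattice_edges l. i \<in> h}"
      using i by (auto simp: row col)
  qed
qed

lemma card_filter_doubleton:
  assumes "x \<noteq> y"
  shows "card {z \<in> {x, y}. P z} = of_bool (P x) + of_bool (P y)"
proof -
  have "{z \<in> {x, y}. P z} = (if P x then {x} else {}) \<union> (if P y then {y} else {})" by auto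
  then show ?thesis using assms by simp
qed

lemma card_lattice_edges_containing_both:
  assumes "2 \<le> l" "i < l * l" "j < l * l"
  shows "card {h \<in> lattice_edges l. i \<in> h \<and> j \<in> h}
    = of_bool (i div l = j div l) + of_bool (i mod l = j mod l)"
proof -
  let ?R = "lattice_row l (i div l)" and ?C = "lattice_col l (i mod l)"
  have "{h \<in> lattice_edges l. i \<in> h \<and> j \<in> h} = {h \<in> {h \<in> lattice_edges l. i \<in> h}. j \<in> h}"
    by simp
  also have "\<dots> = {h \<in> {?R, ?C}. j \<in> h}"
    unfolding lattice_edges_containing[OF assms(1,2)] ..
  finally have "card {h \<in> lattice_edges l. i \<in> h \<and> j \<in> h} = of_bool (j \<in> ?R) + of_bool (j \<in> ?C)"
    using card_filter_doubleton[OF lattice_row_neq_col[OF assms(1) div_mod_less_mult(2)[OF assms(2)]]]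
    by simp
  moreover have "j \<in> ?R \<longleftrightarrow> i div l = j div l" "j \<in> ?C \<longleftrightarrow> i mod l = j mod l"
    using assms div_mod_less_mult[OF assms(2)] by (auto simp: mem_lattice_row mem_lattice_col)
  ultimately show ?thesis by simp
qed

lemma hdeg_lattice_edges: "2 \<le> l \<Longrightarrow> i < l * l \<Longrightarrow> hdeg (lattice_edges l) i = 2"
  using card_lattice_edges_containing_both[of l i i] by (simp add: hdeg_def)

lemma norm_laplacian_lattice_edges:
  assumes "2 \<le> l"
  shows "norm_laplacian (l\<^sup>2) (lattice_edges l)
    = kronecker_sum ((1 / 2) \<cdot>\<^sub>m ones_mat l) ((1 / 2) \<cdot>\<^sub>m ones_mat l)"
    (is "?L = ?K")
proof (rule eq_matI)
  let ?D = "mat (l * l) (l * l) (\<lambda>(i, j). if i = j then 1 / real (hdeg (lattice_edges l) i) else 0)"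
  let ?A = "mat (l * l) (l * l) (\<lambda>(i, j). hadj (lattice_edges l) i j)"
  have ones: "(1 / 2 :: real) \<cdot>\<^sub>m ones_mat l \<in> carrier_mat l l" by (simp add: ones_mat_def)
  fix i j assume "i < dim_row ?K" "j < dim_col ?K"
  then have i: "i < l * l" and j: "j < l * l"
    using kronecker_sum_carrier_mat[OF ones ones] by simp_all
  have "(?D * ?A) $$ (i, j) = (\<Sum>y<l * l. ?D $$ (i, y) * ?A $$ (y, j))"
    by (rule index_mult_mat_sum[OF _ _ i j]) simp_all
  also have "\<dots> = (\<Sum>y<l * l. if y = i then hadj (lattice_edges l) i j / 2 else 0)"
  proof (rule sum.cong[OF refl])
    fix y assume "y \<in> {..<l * l}"
    then show "?D $$ (i, y) * ?A $$ (y, j) = (if y = i then hadj (lattice_edges l) i j / 2 else 0)"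
      using i j hdeg_lattice_edges[OF assms i] by simp
  qed
  also have "\<dots> = hadj (lattice_edges l) i j / 2" using i by simp
  finally have "?L $$ (i, j) = (if i = j then 1 else 0) - hadj (lattice_edges l) i j / 2"
    using i j by (simp add: norm_laplacian_def power2_eq_square)
  also have "\<dots> = (of_bool (i div l = j div l) + of_bool (i mod l = j mod l)) / 2"
  proof (cases "i = j")
    case False
    then show ?thesis
      using card_lattice_edges_containing_both[OF assms i j] by (simp add: hadj_def)
  qed (simp add: hadj_def)
  also have "\<dots> = ?K $$ (i, j)"
    unfolding index_kronecker_sum[OF ones ones i j]
    using div_mod_less_mult[OF i] div_mod_less_mult[OF j] by (simp add: ones_mat_def)
  finally show "?L $$ (i, j) = ?K $$ (i, j)" .
qed (simp_all add: norm_laplacian_def kronecker_sum_def ones_mat_def power2_eq_square)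

lemma prod_pair_sums_Cons_replicate_zero:
  fixes h :: "'a :: comm_ring_1"
  shows "(\<Prod>a\<leftarrow>h # replicate k 0. \<Prod>b\<leftarrow>h # replicate k 0. [:- (a + b), 1:])
    = [:0, 1:] ^ (k * k) * [:- h, 1:] ^ (2 * k) * [:- (h + h), 1:]"
proof -
  have "(\<Prod>a\<leftarrow>h # replicate k 0. \<Prod>b\<leftarrow>h # replicate k 0. [:- (a + b), 1:])
      = ([:- (h + h), 1:] * [:- h, 1:] ^ k) * ([:- h, 1:] * [:0, 1:] ^ k) ^ k"
    by simp
  also have "\<dots> = [:0, 1:] ^ (k * k) * [:- h, 1:] ^ (2 * k) * [:- (h + h), 1:]"
    by (simp only: power_mult_distrib power_mult[symmetric] mult_2 mult_2_right power_add ac_simps)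
  finally show ?thesis .
qed

theorem mainTheorem9:
  fixes l :: nat
  assumes "l \<ge> 2"
  shows "char_poly (norm_laplacian (l^2) (lattice_edges l)) =
           [:0, 1:] ^ (l^2 - 2*l + 1)
         * [:- (real l / 2), 1:] ^ (2 * (l - 1))
         * [:- real l, 1:]"
proof -
  let ?J = "(1 / 2 :: real) \<cdot>\<^sub>m ones_mat l"
  let ?spectrum = "1 / 2 * real l # replicate (l - 1) 0"
  have J: "?J \<in> carrier_mat l l" by (simp add: ones_mat_def)
  have "char_poly ?J = (\<Prod>a\<leftarrow>?spectrum. [:- a, 1:])"
    by (rule char_poly_smult_ones_mat) (use assms in simp)
  then have "char_poly (norm_laplacian (l^2) (lattice_edges l))
      = (\<Prod>a\<leftarrow>?spectrum. \<Prod>b\<leftarrow>?spectrum. [:- (a + b), 1:])"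
    unfolding norm_laplacian_lattice_edges[OF assms] using char_poly_kronecker_sum[OF J J] by blast
  also have "\<dots> = [:0, 1:] ^ ((l - 1) * (l - 1)) * [:- (1 / 2 * real l), 1:] ^ (2 * (l - 1))
      * [:- (1 / 2 * real l + 1 / 2 * real l), 1:]"
    by (rule prod_pair_sums_Cons_replicate_zero)
  moreover have "(l - 1) * (l - 1) = l^2 - 2*l + 1"
  proof -
    have "(l - 1) * (l - 1) + 2 * l = l^2 + 1" "2 * l \<le> l^2"
      using assms by (cases l; simp add: power2_eq_square algebra_simps)+
    then show ?thesis by linarith
  qed
  moreover have "1 / 2 * real l + 1 / 2 * real l = real l" "1 / 2 * real l = real l / 2" by simp_all
  ultimately show ?thesis by (simp only:)
qed

end
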